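(* For every integer $m\geq 0$, $$\frac{H_{m+1}-1}{\log 2}\leq e_m<\frac{H_{m+1}}{\log 2}-0.161<\frac{H_{m+1}}{\log 2}.$$
   Context: $H_n=\sum_{j=1}^{n}\frac1j$ denotes the $n$-th harmonic number. The sequence $(e_m)_{m\geq0}$ of rational numbers is defined by $e_0=0$ and, for $m\geq1$, $$e_m=\frac{2^{m+1}+\sum_{j=1}^{m}\binom{m+1}{j}e_{m-j}}{2^{m+1}-2}.$$ *)

theory Defs
  imports "HOL-Analysis.Analysis"
begin

function e_seq :: "nat \<Rightarrow> rat" where
  "e_seq m = (if m = 0 then 0 else
     (2 ^ (m + 1) + (\<Sum>j\<in>{1..m}. of_nat ((m + 1) choose j) * e_seq (m - j)))
       / (2 ^ (m + 1) - 2))"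
  by auto
termination
  by (relation "Wellfounded.measure id") auto

declare e_seq.simps [simp del]

end

theory Submission
  imports Defs
begin

(* The recurrence has nonnegative coefficients, so it obeys a comparison principle: a sequence
   that starts at or above (below) e_0 = 0 and satisfies the recurrence with >= (<=) for every
   m >= 1 dominates (is dominated by) e.  For candidates a H_(m+1) + b the defect of the recurrence
   is 2^(m+1) (1 - a S_(m+1)) + a H_(m+1), by the identity sum_k C(n,k) H_k = 2^n (H_n - S_n),
   where S_n = sum_(k=1..n) 1/(k 2^k) are the partial sums of ln 2.  With a = 1/ln 2 the defect is
   nonnegative since S_n <= ln 2, which gives the lower bound; for the upper bound the tail estimate
   ln 2 - S_n <= 1/((n+1) 2^n) makes the defect small enough to absorb the constant b = -0.162. *)

definition ln2_partial_sum :: "nat \<Rightarrow> real" where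
  "ln2_partial_sum n = (\<Sum>k=1..n. 1 / (real k * 2 ^ k))"

lemma ln2_partial_sum_Suc:
  "ln2_partial_sum (Suc n) = ln2_partial_sum n + 1 / (real (Suc n) * 2 ^ Suc n)"
  by (simp add: ln2_partial_sum_def)

(* The term for k = 0 is 1 / 0 = 0. *)
lemma sums_ln2: "(\<lambda>k. 1 / (real k * 2 ^ k)) sums ln 2"
proof -
  have "(\<lambda>k. - ((- (-1/2)) ^ k) / of_nat k) sums ln (1 + (-1/2 :: real))"
    by (rule ln_series') simp
  then have "(\<lambda>k. - (1 / (real k * 2 ^ k))) sums - ln 2"
    by (simp add: ln_div power_one_over mult.commute)
  then show ?thesis
    using sums_minus by fastforce
qed

lemma sums_ln2_tail:
  "(\<lambda>k. 1 / (real (k + Suc n) * 2 ^ (k + Suc n))) sums (ln 2 - ln2_partial_sum n)"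
proof -
  have "(\<Sum>k<Suc n. 1 / (real k * 2 ^ k)) = ln2_partial_sum n"
    unfolding ln2_partial_sum_def sum.lessThan_Suc_shift by (simp add: sum.atLeast1_atMost_eq)
  then show ?thesis
    using sums_split_initial_segment[OF sums_ln2, of "Suc n"] by simp
qed

lemma ln2_partial_sum_le: "ln2_partial_sum n \<le> ln 2"
  using sums_le[OF _ sums_zero sums_ln2_tail] by simp

lemma ln2_minus_partial_sum_le: "ln 2 - ln2_partial_sum n \<le> 1 / (real (Suc n) * 2 ^ n)"
proof -
  define c where "c = 1 / (real (Suc n) * 2 ^ Suc n)"
  have "(\<lambda>k. c * (1/2) ^ k) sums (c * 2)"
    using sums_mult[OF geometric_sums[of "1/2 :: real"]] by simp
  moreover have "1 / (real (k + Suc n) * 2 ^ (k + Suc n)) \<le> c * (1/2) ^ k" for k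
    unfolding c_def power_add power_one_over by (simp add: frac_le)
  ultimately have "ln 2 - ln2_partial_sum n \<le> c * 2"
    by (intro sums_le[OF _ sums_ln2_tail[of n]])
  then show ?thesis
    by (simp add: c_def)
qed

lemma ln2_le: "ln (2::real) \<le> 0.6933"
  using ln_approx_bounds[of 2 2] by (simp add: eval_nat_numeral)

lemma harm_le_half_Suc: "1 \<le> n \<Longrightarrow> harm n \<le> (real n + 1) / (2::real)"
proof (induction n rule: dec_induct)
  case base
  then show ?case by (simp add: harm_expand)
next
  case (step n)
  then have "inverse (real (Suc n)) \<le> 1 / 2"
    by (simp add: field_simps)
  with step show ?case
    by (simp add: harm_Suc)
qed

lemma sum_binomial_Suc:
  fixes f :: "nat \<Rightarrow> 'a :: comm_semiring_1"
  shows "(\<Sum>k\<le>Suc n. of_nat (Suc n choose k) * f k)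
       = (\<Sum>k\<le>n. of_nat (n choose k) * (f k + f (Suc k)))"
proof -
  have "(\<Sum>k\<le>n. of_nat (n choose k) * f k)
      = f 0 + (\<Sum>k<n. of_nat (n choose Suc k) * f (Suc k))"
    by (simp add: sum.atMost_shift)
  also have "\<dots> = f 0 + (\<Sum>k\<le>n. of_nat (n choose Suc k) * f (Suc k))"
    by (simp add: lessThan_Suc_atMost[symmetric] binomial_eq_0)
  finally have shifted: "(\<Sum>k\<le>n. of_nat (n choose k) * f k)
      = f 0 + (\<Sum>k\<le>n. of_nat (n choose Suc k) * f (Suc k))" .
  have "(\<Sum>k\<le>Suc n. of_nat (Suc n choose k) * f k)
      = f 0 + (\<Sum>k\<le>n. of_nat (n choose k) * f (Suc k))
        + (\<Sum>k\<le>n. of_nat (n choose Suc k) * f (Suc k))"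
    by (simp only: sum.atMost_Suc_shift binomial_Suc_Suc of_nat_add distrib_right sum.distrib
        binomial_n_0 of_nat_1 mult_1 add.assoc)
  then show ?thesis
    by (simp add: shifted distrib_left sum.distrib add_ac)
qed

lemma of_nat_choose_row_sum: "(\<Sum>k\<le>n. of_nat (n choose k)) = (2 ^ n :: 'a :: comm_semiring_1)"
  by (metis choose_row_sum of_nat_numeral of_nat_power of_nat_sum)

lemma sum_binomial_interior:
  fixes f :: "nat \<Rightarrow> 'a :: comm_ring_1"
  shows "(\<Sum>i<m. of_nat (Suc m choose Suc i) * f (Suc i))
       = (\<Sum>k\<le>Suc m. of_nat (Suc m choose k) * f k) - f 0 - f (Suc m)"
proof -
  have "(\<Sum>k\<le>m. of_nat (Suc m choose Suc k) * f (Suc k))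
      = (\<Sum>k<m. of_nat (Suc m choose Suc k) * f (Suc k)) + f (Suc m)"
    by (simp add: lessThan_Suc_atMost[symmetric] del: binomial_Suc_Suc)
  then show ?thesis
    by (simp add: sum.atMost_Suc_shift del: binomial_Suc_Suc sum.atMost_Suc)
qed

lemma sum_binomial_div_Suc:
  "(\<Sum>k\<le>n. real (n choose k) / real (Suc k)) = (2 ^ Suc n - 1) / real (Suc n)"
proof -
  have absorb: "real (n choose k) / real (Suc k) = real (Suc n choose Suc k) / real (Suc n)" for k
    using Suc_times_binomial_eq[of n k] by (simp add: field_simps flip: of_nat_mult)
  have "(2::real) ^ Suc n = (\<Sum>k\<le>Suc n. real (Suc n choose k))"
    by (rule of_nat_choose_row_sum[symmetric])
  also have "\<dots> = 1 + (\<Sum>k\<le>n. real (Suc n choose Suc k))"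
    by (simp only: sum.atMost_Suc_shift binomial_n_0 of_nat_1)
  finally have row: "(\<Sum>k\<le>n. real (Suc n choose Suc k)) = 2 ^ Suc n - 1"
    by simp
  show ?thesis
    unfolding absorb sum_divide_distrib[symmetric] row ..
qed

lemma sum_binomial_harm:
  "(\<Sum>k\<le>n. real (n choose k) * harm k) = 2 ^ n * (harm n - ln2_partial_sum n)"
proof (induction n)
  case 0
  then show ?case by (simp add: ln2_partial_sum_def harm_expand)
next
  case (Suc n)
  have "(\<Sum>k\<le>Suc n. real (Suc n choose k) * harm k)
      = (\<Sum>k\<le>n. real (n choose k) * (harm k + harm (Suc k)))"
    by (rule sum_binomial_Suc)
  also have "\<dots> = 2 * (\<Sum>k\<le>n. real (n choose k) * harm k)
      + (\<Sum>k\<le>n. real (n choose k) / real (Suc k))"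
    by (simp add: harm_Suc algebra_simps sum.distrib sum_distrib_left divide_inverse)
  also have "\<dots> = 2 ^ Suc n * ((harm n + 1 / real (Suc n))
      - (ln2_partial_sum n + 1 / (real (Suc n) * 2 ^ Suc n)))"
    unfolding Suc.IH sum_binomial_div_Suc by (simp add: field_simps) (simp add: add_nonneg_eq_0_iff)
  also have "\<dots> = 2 ^ Suc n * (harm (Suc n) - ln2_partial_sum (Suc n))"
    by (simp add: harm_Suc ln2_partial_sum_Suc inverse_eq_divide)
  finally show ?case .
qed

abbreviation E :: "nat \<Rightarrow> real" where
  "E m \<equiv> real_of_rat (e_seq m)"

definition e_rhs :: "(nat \<Rightarrow> real) \<Rightarrow> nat \<Rightarrow> real" where
  "e_rhs x m = 2 ^ Suc m + (\<Sum>i<m. real (Suc m choose Suc i) * x i)"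

lemma two_power_Suc_minus_two_pos: "1 \<le> m \<Longrightarrow> 0 < (2::real) ^ Suc m - 2"
  using power_strict_increasing[of 1 "Suc m" "2::real"] by simp

lemma e_seq_0: "E 0 = 0"
  by (simp add: e_seq.simps)

lemma e_seq_recurrence:
  assumes "1 \<le> m"
  shows "(2 ^ Suc m - 2) * E m = e_rhs E m"
proof -
  have reindex: "(\<Sum>j\<in>{1..m}. real (Suc m choose j) * E (m - j))
      = (\<Sum>i<m. real (Suc m choose Suc i) * E i)"
  proof (rule sum.reindex_bij_witness[of _ "\<lambda>i. m - i" "\<lambda>j. m - j"])
    fix j assume "j \<in> {1..m}"
    then have "Suc m choose Suc (m - j) = Suc m choose j"
      using binomial_symmetric[of j "Suc m"] by (simp add: Suc_diff_le)
    then show "real (Suc m choose Suc (m - j)) * E (m - j) = real (Suc m choose j) * E (m - j)"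
      by simp
  qed auto
  have "E m = (2 ^ Suc m + (\<Sum>j\<in>{1..m}. real (Suc m choose j) * E (m - j))) / (2 ^ Suc m - 2)"
    using assms by (subst e_seq.simps) (simp add: of_rat_divide of_rat_add of_rat_sum of_rat_mult
        of_rat_diff of_rat_power)
  then have "(2 ^ Suc m - 2) * E m = 2 ^ Suc m + (\<Sum>j\<in>{1..m}. real (Suc m choose j) * E (m - j))"
    using two_power_Suc_minus_two_pos[OF assms] by (simp add: field_simps del: binomial_Suc_Suc)
  then show ?thesis
    unfolding e_rhs_def reindex .
qed

lemma e_rhs_mono: "(\<And>i. i < m \<Longrightarrow> x i \<le> y i) \<Longrightarrow> e_rhs x m \<le> e_rhs y m"
  unfolding e_rhs_def by (intro add_left_mono sum_mono mult_left_mono) auto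

lemma e_seq_le_supersolution:
  assumes "0 \<le> x 0" and "\<And>m. 1 \<le> m \<Longrightarrow> e_rhs x m \<le> (2 ^ Suc m - 2) * x m"
  shows "E m \<le> x m"
proof (induction m rule: less_induct)
  case (less m)
  show ?case
  proof (cases "m = 0")
    case True
    with assms(1) show ?thesis by (simp add: e_seq_0)
  next
    case False
    then have "1 \<le> m" by simp
    have "(2 ^ Suc m - 2) * E m = e_rhs E m"
      using \<open>1 \<le> m\<close> by (rule e_seq_recurrence)
    also have "\<dots> \<le> e_rhs x m"
      using less.IH by (rule e_rhs_mono)
    also have "\<dots> \<le> (2 ^ Suc m - 2) * x m"
      using \<open>1 \<le> m\<close> by (rule assms(2))
    finally show ?thesis
      using two_power_Suc_minus_two_pos[OF \<open>1 \<le> m\<close>] by simp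
  qed
qed

lemma e_seq_ge_subsolution:
  assumes "x 0 \<le> 0" and "\<And>m. 1 \<le> m \<Longrightarrow> (2 ^ Suc m - 2) * x m \<le> e_rhs x m"
  shows "x m \<le> E m"
proof (induction m rule: less_induct)
  case (less m)
  show ?case
  proof (cases "m = 0")
    case True
    with assms(1) show ?thesis by (simp add: e_seq_0)
  next
    case False
    then have "1 \<le> m" by simp
    have "(2 ^ Suc m - 2) * x m \<le> e_rhs x m"
      using \<open>1 \<le> m\<close> by (rule assms(2))
    also have "\<dots> \<le> e_rhs E m"
      using less.IH by (rule e_rhs_mono)
    also have "\<dots> = (2 ^ Suc m - 2) * E m"
      using \<open>1 \<le> m\<close> by (rule e_seq_recurrence[symmetric])
    finally show ?thesis
      using two_power_Suc_minus_two_pos[OF \<open>1 \<le> m\<close>] by simp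
  qed
qed

lemma e_rhs_harm_affine:
  "e_rhs (\<lambda>i. a * harm (Suc i) + b) m
     = (2 ^ Suc m - 2) * (a * harm (Suc m) + b)
       + (2 ^ Suc m * (1 - a * ln2_partial_sum (Suc m)) + a * harm (Suc m))"
proof -
  have harm: "(\<Sum>i<m. real (Suc m choose Suc i) * harm (Suc i))
      = 2 ^ Suc m * (harm (Suc m) - ln2_partial_sum (Suc m)) - harm (Suc m)"
    using sum_binomial_interior[of m "harm :: nat \<Rightarrow> real"] sum_binomial_harm[of "Suc m"]
    by (simp add: harm_expand del: binomial_Suc_Suc)
  have ones: "(\<Sum>i<m. real (Suc m choose Suc i)) = 2 ^ Suc m - 2"
    using sum_binomial_interior[of m "\<lambda>_. 1 :: real"]
      of_nat_choose_row_sum[of "Suc m", where 'a = real]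
    by (simp del: binomial_Suc_Suc)
  have "e_rhs (\<lambda>i. a * harm (Suc i) + b) m
      = 2 ^ Suc m + a * (\<Sum>i<m. real (Suc m choose Suc i) * harm (Suc i))
        + b * (\<Sum>i<m. real (Suc m choose Suc i))"
    by (simp add: e_rhs_def algebra_simps sum.distrib sum_distrib_left)
  then show ?thesis
    unfolding harm ones by (simp add: algebra_simps)
qed

lemma e_rhs_fun_upd_0:
  assumes "1 \<le> m"
  shows "e_rhs (x(0 := y)) m = e_rhs x m + real (Suc m) * (y - x 0)"
proof -
  obtain k where m: "m = Suc k"
    using assms by (cases m) auto
  show ?thesis
    unfolding e_rhs_def m sum.lessThan_Suc_shift by (simp add: algebra_simps del: binomial_Suc_Suc)
qed

lemma e_seq_ge_harm: "(harm (Suc m) - 1) / ln 2 \<le> E m"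
proof -
  define x :: "nat \<Rightarrow> real" where "x i = 1 / ln 2 * harm (Suc i) + (- 1 / ln 2)" for i
  have "x m \<le> E m"
  proof (rule e_seq_ge_subsolution)
    show "x 0 \<le> 0"
      by (simp add: x_def harm_expand)
    fix k :: nat
    have "0 \<le> 1 - 1 / ln 2 * ln2_partial_sum (Suc k)"
      using ln2_partial_sum_le[of "Suc k"] by (simp add: field_simps)
    then have "0 \<le> 2 ^ Suc k * (1 - 1 / ln 2 * ln2_partial_sum (Suc k)) + 1 / ln 2 * harm (Suc k)"
      by (simp add: harm_nonneg)
    then show "(2 ^ Suc k - 2) * x k \<le> e_rhs x k"
      unfolding x_def e_rhs_harm_affine by linarith
  qed
  then show ?thesis
    by (simp add: x_def diff_divide_distrib)
qed

lemma ln2_tail_harm_le: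
  assumes "2 \<le> n"
  shows "2 ^ n * (ln 2 - ln2_partial_sum n) + harm n \<le> real n * (1 - 0.162 * ln 2)"
proof (cases "n = 2")
  case True
  \<comment> \<open>here the tail estimate is too weak and the exact value of \<open>ln2_partial_sum 2\<close> is needed\<close>
  have "ln2_partial_sum 2 = 5 / 8"
    by (simp add: ln2_partial_sum_def eval_nat_numeral)
  moreover have "harm 2 = (3 / 2 :: real)"
    by (simp add: harm_expand)
  ultimately show ?thesis
    using True ln2_le by simp
next
  case False
  with assms have "3 \<le> n" by simp
  have "2 ^ n * (ln 2 - ln2_partial_sum n) \<le> 2 ^ n * (1 / (real (Suc n) * 2 ^ n))"
    using ln2_minus_partial_sum_le by (rule mult_left_mono) simp
  also have "\<dots> = 1 / real (Suc n)"
    by simp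
  also have "\<dots> \<le> 1 / 4"
    using \<open>3 \<le> n\<close> by (simp add: field_simps)
  finally have tail: "2 ^ n * (ln 2 - ln2_partial_sum n) \<le> 1 / 4" .
  have "harm n \<le> (real n + 1) / 2"
    using \<open>3 \<le> n\<close> by (intro harm_le_half_Suc) simp
  moreover have "3 \<le> real n"
    using \<open>3 \<le> n\<close> by simp
  ultimately have "2 ^ n * (ln 2 - ln2_partial_sum n) + harm n \<le> real n * (2219 / 2500)"
    using tail by argo
  also have "\<dots> \<le> real n * (1 - 0.162 * ln 2)"
    using ln2_le by (intro mult_left_mono) simp_all
  finally show ?thesis .
qed

lemma e_seq_le_harm:
  assumes "1 \<le> m"
  shows "E m \<le> harm (Suc m) / ln 2 - 0.162"
proof -
  define w :: "nat \<Rightarrow> real" where "w i = 1 / ln 2 * harm (Suc i) + (- 0.162)" for i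
  \<comment> \<open>\<open>w\<close> itself fails the test at \<open>m = 1\<close>; lowering \<open>w 0\<close> to \<open>e_seq 0 = 0\<close> repairs it\<close>
  have "E m \<le> (w(0 := 0)) m"
  proof (rule e_seq_le_supersolution)
    show "0 \<le> (w(0 := 0)) 0"
      by simp
    fix k :: nat
    assume "1 \<le> k"
    have "2 ^ Suc k * (ln 2 - ln2_partial_sum (Suc k)) + harm (Suc k)
        \<le> real (Suc k) * (1 - 0.162 * ln 2)"
      using \<open>1 \<le> k\<close> by (intro ln2_tail_harm_le) simp
    moreover have "2 ^ Suc k * (1 - 1 / ln 2 * ln2_partial_sum (Suc k)) + 1 / ln 2 * harm (Suc k)
        - real (Suc k) * w 0
        = (2 ^ Suc k * (ln 2 - ln2_partial_sum (Suc k)) + harm (Suc k)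
           - real (Suc k) * (1 - 0.162 * ln 2)) / ln 2"
      by (simp add: w_def harm_expand field_simps)
    ultimately have defect: "2 ^ Suc k * (1 - 1 / ln 2 * ln2_partial_sum (Suc k))
        + 1 / ln 2 * harm (Suc k) - real (Suc k) * w 0 \<le> 0"
      by (simp add: divide_nonpos_pos)
    have "e_rhs w k = (2 ^ Suc k - 2) * w k
        + (2 ^ Suc k * (1 - 1 / ln 2 * ln2_partial_sum (Suc k)) + 1 / ln 2 * harm (Suc k))"
      unfolding w_def by (rule e_rhs_harm_affine)
    with defect \<open>1 \<le> k\<close> show "e_rhs (w(0 := 0)) k \<le> (2 ^ Suc k - 2) * (w(0 := 0)) k"
      unfolding e_rhs_fun_upd_0[OF \<open>1 \<le> k\<close>] by simp
  qed
  then show ?thesis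
    using assms by (simp add: w_def)
qed

theorem proposition1:
  fixes m :: nat
  shows "(harm (m + 1) - 1) / ln 2 \<le> real_of_rat (e_seq m)
       \<and> real_of_rat (e_seq m) < harm (m + 1) / ln 2 - 0.161
       \<and> harm (m + 1) / ln 2 - 0.161 < (harm (m + 1) :: real) / ln 2"
proof (intro conjI)
  show "(harm (m + 1) - 1) / ln 2 \<le> E m"
    using e_seq_ge_harm by simp
  show "E m < harm (m + 1) / ln 2 - 0.161"
  proof (cases "m = 0")
    case True
    have "0.161 < 1 / ln (2::real)"
      using ln_2_less_1 by (simp add: field_simps)
    with True show ?thesis
      by (simp add: e_seq_0 harm_expand)
  next
    case False
    then show ?thesis
      using e_seq_le_harm[of m] by simp
  qed
  show "harm (m + 1) / ln 2 - 0.161 < (harm (m + 1) :: real) / ln 2"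
    by simp
qed

end
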